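(* For every 3-uniform hypergraph $\mathcal{H}$ there exists a graph $G$ in which every edge is contained in a triangle such that the domination game on $\mathcal{H}$ is equivalent to the domination game on $G$; and conversely, for every graph $G$ in which every edge is contained in a triangle there exists a 3-uniform hypergraph $\mathcal{H}$ such that the domination game on $\mathcal{H}$ is equivalent to the domination game on $G$.
   Context: Hypergraphs and graphs are finite. Two distinct vertices are adjacent if some edge contains both; $N[v]$ is $v$ together with its adjacent vertices, $N[S]=\bigcup_{v\in S}N[v]$. In the domination game, two players alternately choose vertices $v_1,v_2,\dots$; with $D_i=\{v_1,\dots,v_i\}$, a sequence $v_1,\dots,v_d$ is a legal game if $N[v_i]\setminus N[D_{i-1}]\ne\emptyset$ for all $2\le i\le d$ and $N[D_d]$ is the whole vertex set. Two domination games, on $\mathcal{H}_1$ and $\mathcal{H}_2$, are equivalent if $V(\mathcal{H}_1)=V(\mathcal{H}_2)$ and every sequence $v_1,\dots,v_d$ is a legal game on $\mathcal{H}_1$ iff it is a legal game on $\mathcal{H}_2$. *)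

theory Defs
  imports Main
begin

definition hypergraph :: "'a set \<Rightarrow> 'a set set \<Rightarrow> bool" where
  "hypergraph V E \<longleftrightarrow> finite V \<and> (\<forall>e\<in>E. e \<subseteq> V)"

definition three_uniform :: "'a set \<Rightarrow> 'a set set \<Rightarrow> bool" where
  "three_uniform V E \<longleftrightarrow> hypergraph V E \<and> (\<forall>e\<in>E. card e = 3)"

definition graph :: "'a set \<Rightarrow> 'a set set \<Rightarrow> bool" where
  "graph V E \<longleftrightarrow> hypergraph V E \<and> (\<forall>e\<in>E. card e = 2)"

definition every_edge_in_triangle :: "'a set set \<Rightarrow> bool" where
  "every_edge_in_triangle E \<longleftrightarrow>
     (\<forall>u v. {u, v} \<in> E \<longrightarrow> (\<exists>w. {u, w} \<in> E \<and> {v, w} \<in> E))"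

definition adjacent :: "'a set set \<Rightarrow> 'a \<Rightarrow> 'a \<Rightarrow> bool" where
  "adjacent E u v \<longleftrightarrow> u \<noteq> v \<and> (\<exists>e\<in>E. u \<in> e \<and> v \<in> e)"

definition closed_nbhd :: "'a set \<Rightarrow> 'a set set \<Rightarrow> 'a \<Rightarrow> 'a set" where
  "closed_nbhd V E v = {v} \<union> {u\<in>V. adjacent E v u}"

definition closed_nbhd_set :: "'a set \<Rightarrow> 'a set set \<Rightarrow> 'a set \<Rightarrow> 'a set" where
  "closed_nbhd_set V E S = (\<Union>v\<in>S. closed_nbhd V E v)"

text \<open>A legal domination game: list of vertices v_1..v_d (0-based index i;
  take i vs are the vertices chosen before position i).\<close>
definition legal_game :: "'a set \<Rightarrow> 'a set set \<Rightarrow> 'a list \<Rightarrow> bool" where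
  "legal_game V E vs \<longleftrightarrow>
     set vs \<subseteq> V \<and>
     (\<forall>i. 1 \<le> i \<and> i < length vs \<longrightarrow>
        closed_nbhd V E (vs ! i) - closed_nbhd_set V E (set (take i vs)) \<noteq> {}) \<and>
     closed_nbhd_set V E (set vs) = V"

definition equivalent_games :: "'a set \<Rightarrow> 'a set set \<Rightarrow> 'a set \<Rightarrow> 'a set set \<Rightarrow> bool" where
  "equivalent_games V1 E1 V2 E2 \<longleftrightarrow>
     V1 = V2 \<and> (\<forall>vs. legal_game V1 E1 vs \<longleftrightarrow> legal_game V2 E2 vs)"

end

theory Submission
  imports Defs
begin

text \<open>Legality of a domination game only depends on the closed neighbourhoods, hence only
  on the adjacency relation. So it suffices to pass between a 3-uniform hypergraph and a graph
  with the same adjacency: from a hypergraph take its 2-section (all pairs of adjacent vertices),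
  in which each pair lies in a triangle because every hyperedge has a third vertex; from a graph
  in which every edge lies in a triangle take all its triangles as hyperedges.\<close>

lemma legal_game_cong_adjacent:
  assumes "adjacent E1 = adjacent E2"
  shows "legal_game V E1 = legal_game V E2"
proof -
  have nbhd: "closed_nbhd V E1 = closed_nbhd V E2"
    using assms by (auto simp: closed_nbhd_def fun_eq_iff)
  then have "closed_nbhd_set V E1 = closed_nbhd_set V E2"
    by (auto simp: closed_nbhd_set_def fun_eq_iff)
  with nbhd show ?thesis
    by (auto simp: legal_game_def fun_eq_iff)
qed

lemma equivalent_games_if_adjacent_eq:
  assumes "adjacent E1 = adjacent E2"
  shows "equivalent_games V E1 V E2"
  using legal_game_cong_adjacent[OF assms] by (simp add: equivalent_games_def)

lemma adjacent_iff_edge: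
  assumes "\<forall>e\<in>E. card e = 2"
  shows "adjacent E u v \<longleftrightarrow> {u, v} \<in> E"
proof
  assume "adjacent E u v"
  then obtain e where "e \<in> E" "u \<in> e" "v \<in> e" "u \<noteq> v"
    unfolding adjacent_def by blast
  moreover have "card e = 2"
    using assms \<open>e \<in> E\<close> by blast
  ultimately have "e = {u, v}"
    by (auto simp: card_2_iff)
  with \<open>e \<in> E\<close> show "{u, v} \<in> E"
    by simp
next
  assume "{u, v} \<in> E"
  with assms have "u \<noteq> v"
    by fastforce
  with \<open>{u, v} \<in> E\<close> show "adjacent E u v"
    unfolding adjacent_def by blast
qed

definition two_section :: "'a set set \<Rightarrow> 'a set set" where
  "two_section E = {{u, v} | u v. adjacent E u v}"

lemma adjacent_two_section: "adjacent (two_section E) = adjacent E"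
proof (intro ext iffI)
  fix u v assume "adjacent (two_section E) u v"
  then obtain x y where "adjacent E x y" "u \<in> {x, y}" "v \<in> {x, y}" "u \<noteq> v"
    unfolding adjacent_def two_section_def by blast
  then show "adjacent E u v"
    unfolding adjacent_def by blast
next
  fix u v assume "adjacent E u v"
  then show "adjacent (two_section E) u v"
    unfolding two_section_def adjacent_def by blast
qed

lemma graph_two_section:
  assumes "hypergraph V E"
  shows "graph V (two_section E)"
  using assms unfolding graph_def hypergraph_def two_section_def adjacent_def by auto

lemma every_edge_in_triangle_two_section:
  assumes "\<forall>e\<in>E. 3 \<le> card e"
  shows "every_edge_in_triangle (two_section E)"
  unfolding every_edge_in_triangle_def
proof (intro allI impI)
  fix u v assume "{u, v} \<in> two_section E"
  then obtain x y where "{u, v} = {x, y}" "adjacent E x y"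
    unfolding two_section_def by blast
  then obtain e where e: "e \<in> E" "u \<in> e" "v \<in> e" "u \<noteq> v"
    unfolding adjacent_def by (auto simp: doubleton_eq_iff)
  have "\<not> e \<subseteq> {u, v}"
  proof
    assume "e \<subseteq> {u, v}"
    then have "card e \<le> 2"
      using card_mono[of "{u, v}" e] e(4) by simp
    with e(1) assms show False
      by fastforce
  qed
  then obtain w where w: "w \<in> e" "w \<noteq> u" "w \<noteq> v"
    by blast
  with e have "adjacent E u w" "adjacent E v w"
    unfolding adjacent_def by auto
  then show "\<exists>w. {u, w} \<in> two_section E \<and> {v, w} \<in> two_section E"
    unfolding two_section_def by blast
qed

definition triangle_hypergraph :: "'a set set \<Rightarrow> 'a set set" where
  "triangle_hypergraph E = {{u, v, w} | u v w. {u, v} \<in> E \<and> {v, w} \<in> E \<and> {u, w} \<in> E}"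

lemma adjacent_triangle_hypergraph:
  assumes "\<forall>e\<in>E. card e = 2" and "every_edge_in_triangle E"
  shows "adjacent (triangle_hypergraph E) = adjacent E"
proof (intro ext iffI)
  fix u v assume "adjacent (triangle_hypergraph E) u v"
  then obtain x y z where "{x, y} \<in> E" "{y, z} \<in> E" "{x, z} \<in> E"
      "u \<in> {x, y, z}" "v \<in> {x, y, z}" "u \<noteq> v"
    unfolding adjacent_def triangle_hypergraph_def by blast
  then have "{u, v} \<in> E"
    by (elim insertE emptyE) (simp_all add: insert_commute)
  with assms(1) show "adjacent E u v"
    by (simp add: adjacent_iff_edge)
next
  fix u v assume uv: "adjacent E u v"
  with assms(1) have "{u, v} \<in> E"
    by (simp add: adjacent_iff_edge)
  with assms(2) obtain w where "{u, w} \<in> E" "{v, w} \<in> E"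
    unfolding every_edge_in_triangle_def by blast
  with \<open>{u, v} \<in> E\<close> have "{u, v, w} \<in> triangle_hypergraph E"
    unfolding triangle_hypergraph_def by blast
  with uv show "adjacent (triangle_hypergraph E) u v"
    unfolding adjacent_def by blast
qed

lemma three_uniform_triangle_hypergraph:
  assumes "graph V E"
  shows "three_uniform V (triangle_hypergraph E)"
  unfolding three_uniform_def hypergraph_def
proof (intro conjI ballI)
  show "finite V"
    using assms by (simp add: graph_def hypergraph_def)
next
  fix e assume "e \<in> triangle_hypergraph E"
  then obtain u v w where e: "e = {u, v, w}" and edges: "{u, v} \<in> E" "{v, w} \<in> E" "{u, w} \<in> E"
    unfolding triangle_hypergraph_def by blast
  have "\<forall>e\<in>E. card e = 2" "\<forall>e\<in>E. e \<subseteq> V"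
    using assms by (auto simp: graph_def hypergraph_def)
  with edges have "adjacent E u v" "adjacent E v w" "adjacent E u w" "{u, v, w} \<subseteq> V"
    by (auto simp: adjacent_iff_edge)
  with e show "e \<subseteq> V" "card e = 3"
    by (auto simp: adjacent_def)
qed

theorem proposition3:
  shows "(\<forall>(V::'a set) E. three_uniform V E \<longrightarrow>
            (\<exists>V' E'. graph V' E' \<and> every_edge_in_triangle E' \<and> equivalent_games V E V' E'))
       \<and> (\<forall>(V::'a set) E. graph V E \<and> every_edge_in_triangle E \<longrightarrow>
            (\<exists>V' E'. three_uniform V' E' \<and> equivalent_games V' E' V E))"
proof (intro conjI allI impI)
  fix V :: "'a set" and E
  assume "three_uniform V E"
  then have "graph V (two_section E)" "every_edge_in_triangle (two_section E)"
    by (simp_all add: three_uniform_def graph_two_section every_edge_in_triangle_two_section)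
  moreover have "equivalent_games V E V (two_section E)"
    by (simp add: equivalent_games_if_adjacent_eq adjacent_two_section)
  ultimately show "\<exists>V' E'. graph V' E' \<and> every_edge_in_triangle E' \<and> equivalent_games V E V' E'"
    by blast
next
  fix V :: "'a set" and E
  assume "graph V E \<and> every_edge_in_triangle E"
  then have "three_uniform V (triangle_hypergraph E)"
    "equivalent_games V (triangle_hypergraph E) V E"
    by (auto simp: graph_def intro!: three_uniform_triangle_hypergraph
        equivalent_games_if_adjacent_eq adjacent_triangle_hypergraph)
  then show "\<exists>V' E'. three_uniform V' E' \<and> equivalent_games V' E' V E"
    by blast
qed

end
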